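(* If the feasibility requirement of an abstract network design problem $P$ is memoryless, then $P$ admits a min operator (with factor $O(1)$).
   Context: Abstract network design: instance = connected graph $G=(V,E)$ with edge lengths $d\ge0$, online requests $Z_i\subseteq V$; with $\mathcal Z_i=\bigcup_{j\le i}Z_j$ the algorithm irrevocably outputs at step $i$ a response $(R_i,C_i)$, $R_i\subseteq E$, $C_i$ an ordered list of pairs of $\binom{\mathcal Z_i}{2}$. Feasibility functions $\mathcal F_i$ map $(C_1,\ldots,C_i)$ to $\{0,1\}$; a solution is feasible iff $\mathcal F_i(C_1,\ldots,C_i)=1$ and each pair of $C_j$ is connected in $R_j$, $j\le i$; it must be feasible at every step. Load function $\rho$ on sets of time steps: subadditive, monotone increasing, zero exactly on $\emptyset$; cost $=\sum_e d(e)\rho(\{j:e\in R_j\})$. The feasibility function is memoryless if whenever $\mathcal F_i(C_1,\ldots,C_i)=1$, then for all $(C'_1,\ldots,C'_{i-1})$ with $\mathcal F_{i-1}(C'_1,\ldots,C'_{i-1})=1$ we have $\mathcal F_i(C'_1,\ldots,C'_{i-1},C_i)=1$. $P$ admits a min operator with factor $\eta$ if for any two deterministic online algorithms $A,B$ there is a deterministic online algorithm $C$ with $\mathrm{cost}(C)\le\eta\min\{\mathrm{cost}(A),\mathrm{cost}(B)\}$ on every request sequence; "admits a min operator" means with $\eta=O(1)$. *)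

theory Defs
  imports Complex_Main
begin

(* Time steps are 1-based: step i sees the prefix  take i Zs. *)

definition connected_by :: "'v set set \<Rightarrow> 'v \<Rightarrow> 'v \<Rightarrow> bool" where
  "connected_by R u v \<longleftrightarrow> (u, v) \<in> {(x, y). {x, y} \<in> R}\<^sup>*"

definition valid_instance ::
  "'v set \<Rightarrow> 'v set set \<Rightarrow> ('v set \<Rightarrow> real) \<Rightarrow> 'v set list \<Rightarrow> bool" where
  "valid_instance V E d Zs \<longleftrightarrow>
     finite V \<and>
     E \<subseteq> {{u, v} | u v. u \<in> V \<and> v \<in> V \<and> u \<noteq> v} \<and>
     (\<forall>u\<in>V. \<forall>v\<in>V. connected_by E u v) \<and>
     (\<forall>e\<in>E. 0 \<le> d e) \<and>
     (\<forall>Z\<in>set Zs. Z \<subseteq> V)"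

definition load_function :: "(nat set \<Rightarrow> real) \<Rightarrow> bool" where
  "load_function \<rho> \<longleftrightarrow>
     (\<forall>S T. finite S \<longrightarrow> finite T \<longrightarrow> \<rho> (S \<union> T) \<le> \<rho> S + \<rho> T) \<and>
     (\<forall>S T. finite T \<longrightarrow> S \<subseteq> T \<longrightarrow> \<rho> S \<le> \<rho> T) \<and>
     (\<forall>S. finite S \<longrightarrow> (\<rho> S = 0 \<longleftrightarrow> S = {}))"

(* Feasibility functions: F V E d (take i Zs) [C_1,...,C_i] is F_i(C_1,...,C_i) on that instance. *)
type_synonym 'v feas =
  "'v set \<Rightarrow> 'v set set \<Rightarrow> ('v set \<Rightarrow> real) \<Rightarrow> 'v set list \<Rightarrow> 'v set list list \<Rightarrow> bool"

(* A response (R_i, C_i): edge set and ordered list of unordered pairs. *)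
type_synonym 'v response = "'v set set \<times> 'v set list"

(* Deterministic online algorithm: response at step i depends on the graph and Z_1..Z_i only. *)
type_synonym 'v algorithm =
  "'v set \<Rightarrow> 'v set set \<Rightarrow> ('v set \<Rightarrow> real) \<Rightarrow> 'v set list \<Rightarrow> 'v response"

definition memoryless :: "'v feas \<Rightarrow> bool" where
  "memoryless F \<longleftrightarrow>
     (\<forall>V E d Zs Cs Cs'. valid_instance V E d Zs \<longrightarrow> Cs \<noteq> [] \<longrightarrow>
        length Cs = length Zs \<longrightarrow> length Cs' = length Cs - 1 \<longrightarrow>
        F V E d Zs Cs \<longrightarrow> F V E d (butlast Zs) Cs' \<longrightarrow>
        F V E d Zs (Cs' @ [last Cs]))"

definition good_response :: "'v set set \<Rightarrow> 'v set list \<Rightarrow> 'v response \<Rightarrow> bool" where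
  "good_response E Zs r \<longleftrightarrow>
     fst r \<subseteq> E \<and>
     (\<forall>p\<in>set (snd r). \<exists>u v. p = {u, v} \<and> u \<noteq> v \<and>
         u \<in> \<Union>(set Zs) \<and> v \<in> \<Union>(set Zs) \<and> connected_by (fst r) u v)"

definition feasible_sol ::
  "'v feas \<Rightarrow> 'v set \<Rightarrow> 'v set set \<Rightarrow> ('v set \<Rightarrow> real) \<Rightarrow> 'v set list \<Rightarrow> 'v response list \<Rightarrow> bool" where
  "feasible_sol F V E d Zs rs \<longleftrightarrow>
     length rs = length Zs \<and>
     (\<forall>i\<in>{1..length Zs}.
        F V E d (take i Zs) (map snd (take i rs)) \<and>
        good_response E (take i Zs) (rs ! (i - 1)))"

definition run :: "'v algorithm \<Rightarrow> 'v set \<Rightarrow> 'v set set \<Rightarrow> ('v set \<Rightarrow> real) \<Rightarrow> 'v set list \<Rightarrow> 'v response list" where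
  "run A V E d Zs = map (\<lambda>i. A V E d (take i Zs)) [1..<Suc (length Zs)]"

definition online_alg :: "'v feas \<Rightarrow> 'v algorithm \<Rightarrow> bool" where
  "online_alg F A \<longleftrightarrow>
     (\<forall>V E d Zs. valid_instance V E d Zs \<longrightarrow> feasible_sol F V E d Zs (run A V E d Zs))"

definition cost :: "(nat set \<Rightarrow> real) \<Rightarrow> 'v set set \<Rightarrow> ('v set \<Rightarrow> real) \<Rightarrow> 'v response list \<Rightarrow> real" where
  "cost \<rho> E d rs = (\<Sum>e\<in>E. d e * \<rho> {j \<in> {1..length rs}. e \<in> fst (rs ! (j - 1))})"

definition admits_min_operator_with_factor :: "'v feas \<Rightarrow> (nat set \<Rightarrow> real) \<Rightarrow> real \<Rightarrow> bool" where
  "admits_min_operator_with_factor F \<rho> \<eta> \<longleftrightarrow>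
     (\<forall>A B. online_alg F A \<longrightarrow> online_alg F B \<longrightarrow>
        (\<exists>C. online_alg F C \<and>
           (\<forall>V E d Zs. valid_instance V E d Zs \<longrightarrow>
              cost \<rho> E d (run C V E d Zs)
                \<le> \<eta> * min (cost \<rho> E d (run A V E d Zs)) (cost \<rho> E d (run B V E d Zs)))))"

(* "admits a min operator": with some constant factor eta = O(1), independent of A, B and the instance *)
definition admits_min_operator :: "'v feas \<Rightarrow> (nat set \<Rightarrow> real) \<Rightarrow> bool" where
  "admits_min_operator F \<rho> \<longleftrightarrow> (\<exists>\<eta>. admits_min_operator_with_factor F \<rho> \<eta>)"

end

theory Submission
  imports Defs
begin

text \<open>The combined algorithm, at each step, imitates whichever of A and B has been cheaper on
  the requests seen so far. Memorylessness lets it switch between the two at any step without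
  losing feasibility. For the cost, split the steps into those where it imitated A and those where
  it imitated B; by subadditivity of the load it suffices to bound each part by
  min(cost A, cost B). If t is the last step at which it imitated A, the first part is at most the
  cost of A up to step t, which by the choice at step t is at most the cost of B up to step t, so
  at most both full costs. Symmetrically for B, which gives the factor 2.\<close>

lemma run_length [simp]: "length (run A V E d Zs) = length Zs"
  unfolding run_def by (simp del: upt_Suc)

lemma run_nth: "j < length Zs \<Longrightarrow> run A V E d Zs ! j = A V E d (take (Suc j) Zs)"
  unfolding run_def by (simp del: upt_Suc)

lemma run_take: "run A V E d (take j Zs) = take j (run A V E d Zs)"
  by (rule nth_equalityI) (auto simp: run_nth min_def split: if_splits)

lemma valid_instance_take: "valid_instance V E d Zs \<Longrightarrow> valid_instance V E d (take i Zs)"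
  unfolding valid_instance_def by (auto dest: in_set_takeD)

lemma load_function_empty: "load_function \<rho> \<Longrightarrow> \<rho> {} = 0"
  unfolding load_function_def by blast

lemma load_function_mono: "load_function \<rho> \<Longrightarrow> finite T \<Longrightarrow> S \<subseteq> T \<Longrightarrow> \<rho> S \<le> \<rho> T"
  unfolding load_function_def by blast

lemma load_function_subadditive:
  "load_function \<rho> \<Longrightarrow> finite S \<Longrightarrow> finite T \<Longrightarrow> \<rho> (S \<union> T) \<le> \<rho> S + \<rho> T"
  unfolding load_function_def by blast

definition cost_on ::
  "(nat set \<Rightarrow> real) \<Rightarrow> 'v set set \<Rightarrow> ('v set \<Rightarrow> real) \<Rightarrow> 'v response list \<Rightarrow> nat set \<Rightarrow> real" where
  "cost_on \<rho> E d rs S = (\<Sum>e\<in>E. d e * \<rho> {j \<in> S. e \<in> fst (rs ! (j - 1))})"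

lemma cost_eq_cost_on: "cost \<rho> E d rs = cost_on \<rho> E d rs {1..length rs}"
  unfolding cost_def cost_on_def ..

lemma cost_take_eq_cost_on:
  assumes "t \<le> length rs"
  shows "cost \<rho> E d (take t rs) = cost_on \<rho> E d rs {1..t}"
  unfolding cost_def cost_on_def using assms
  by (intro sum.cong refl arg_cong[where f = "\<lambda>S. d _ * \<rho> S"]) auto

lemma cost_on_empty:
  assumes "load_function \<rho>"
  shows "cost_on \<rho> E d rs {} = 0"
  using load_function_empty[OF assms] by (simp add: cost_on_def)

lemma cost_on_mono:
  assumes "load_function \<rho>" "\<forall>e\<in>E. 0 \<le> d e" "finite T" "S \<subseteq> T"
  shows "cost_on \<rho> E d rs S \<le> cost_on \<rho> E d rs T"
  unfolding cost_on_def
proof (rule sum_mono)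
  fix e assume "e \<in> E"
  have "{j \<in> S. e \<in> fst (rs ! (j - 1))} \<subseteq> {j \<in> T. e \<in> fst (rs ! (j - 1))}"
    using assms(4) by auto
  then have "\<rho> {j \<in> S. e \<in> fst (rs ! (j - 1))} \<le> \<rho> {j \<in> T. e \<in> fst (rs ! (j - 1))}"
    using load_function_mono[OF assms(1)] assms(3) by simp
  then show "d e * \<rho> {j \<in> S. e \<in> fst (rs ! (j - 1))} \<le> d e * \<rho> {j \<in> T. e \<in> fst (rs ! (j - 1))}"
    using assms(2) \<open>e \<in> E\<close> by (simp add: mult_left_mono)
qed

lemma cost_on_nonneg:
  assumes "load_function \<rho>" "\<forall>e\<in>E. 0 \<le> d e" "finite S"
  shows "0 \<le> cost_on \<rho> E d rs S"
  using cost_on_mono[OF assms, of "{}" rs] cost_on_empty[OF assms(1), of E d rs] by simp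

lemma cost_nonneg:
  assumes "load_function \<rho>" "\<forall>e\<in>E. 0 \<le> d e"
  shows "0 \<le> cost \<rho> E d rs"
  unfolding cost_eq_cost_on using cost_on_nonneg[OF assms] by simp

lemma cost_on_Un_le:
  assumes "load_function \<rho>" "\<forall>e\<in>E. 0 \<le> d e" "finite S" "finite T"
  shows "cost_on \<rho> E d rs (S \<union> T) \<le> cost_on \<rho> E d rs S + cost_on \<rho> E d rs T"
  unfolding cost_on_def sum.distrib[symmetric]
proof (rule sum_mono)
  fix e assume "e \<in> E"
  have "{j \<in> S \<union> T. e \<in> fst (rs ! (j - 1))}
      = {j \<in> S. e \<in> fst (rs ! (j - 1))} \<union> {j \<in> T. e \<in> fst (rs ! (j - 1))}" by auto
  moreover have "\<rho> ({j \<in> S. e \<in> fst (rs ! (j - 1))} \<union> {j \<in> T. e \<in> fst (rs ! (j - 1))})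
      \<le> \<rho> {j \<in> S. e \<in> fst (rs ! (j - 1))} + \<rho> {j \<in> T. e \<in> fst (rs ! (j - 1))}"
    using load_function_subadditive[OF assms(1)] assms(3,4) by simp
  ultimately show "d e * \<rho> {j \<in> S \<union> T. e \<in> fst (rs ! (j - 1))}
      \<le> d e * \<rho> {j \<in> S. e \<in> fst (rs ! (j - 1))} + d e * \<rho> {j \<in> T. e \<in> fst (rs ! (j - 1))}"
    using assms(2) \<open>e \<in> E\<close> by (simp add: mult_left_mono flip: distrib_left)
qed

lemma cost_on_cong:
  assumes "\<forall>j\<in>S. rs ! (j - 1) = rs' ! (j - 1)"
  shows "cost_on \<rho> E d rs S = cost_on \<rho> E d rs' S"
  unfolding cost_on_def using assms by (intro sum.cong refl) (metis (mono_tags, lifting))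

lemma cost_take_le:
  assumes "load_function \<rho>" "\<forall>e\<in>E. 0 \<le> d e" "t \<le> length rs"
  shows "cost \<rho> E d (take t rs) \<le> cost \<rho> E d rs"
proof -
  have "cost \<rho> E d (take t rs) = cost_on \<rho> E d rs {1..t}"
    using assms(3) by (rule cost_take_eq_cost_on)
  also have "\<dots> \<le> cost_on \<rho> E d rs {1..length rs}"
    using assms by (intro cost_on_mono) auto
  finally show ?thesis unfolding cost_eq_cost_on .
qed

lemma cost_on_le_min_cost:
  assumes lf: "load_function \<rho>" and dn: "\<forall>e\<in>E. 0 \<le> d e"
    and len: "length rA = n" "length rB = n" and S: "S \<subseteq> {1..n}"
    and cheaper: "\<forall>j\<in>S. cost \<rho> E d (take j rA) \<le> cost \<rho> E d (take j rB)"
  shows "cost_on \<rho> E d rA S \<le> min (cost \<rho> E d rA) (cost \<rho> E d rB)"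
proof (cases "S = {}")
  case True
  then show ?thesis using cost_on_empty[OF lf, of E d rA] cost_nonneg[OF lf dn] by simp
next
  case False
  define t where "t = Max S"
  have fin: "finite S" using S finite_subset by blast
  have "t \<in> S" unfolding t_def using fin False by (rule Max_in)
  then have "t \<le> n" using S by auto
  have "cost_on \<rho> E d rA S \<le> cost_on \<rho> E d rA {1..t}"
    using S fin by (intro cost_on_mono[OF lf dn]) (auto simp: t_def)
  also have "\<dots> = cost \<rho> E d (take t rA)"
    using \<open>t \<le> n\<close> len by (simp add: cost_take_eq_cost_on)
  finally have "cost_on \<rho> E d rA S \<le> cost \<rho> E d (take t rA)" .
  moreover have "cost \<rho> E d (take t rA) \<le> cost \<rho> E d (take t rB)"
    using cheaper \<open>t \<in> S\<close> by blast
  moreover have "cost \<rho> E d (take t rA) \<le> cost \<rho> E d rA"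
    and "cost \<rho> E d (take t rB) \<le> cost \<rho> E d rB"
    using cost_take_le[OF lf dn] \<open>t \<le> n\<close> len by auto
  ultimately show ?thesis by simp
qed

lemma cost_interleave_le:
  assumes lf: "load_function \<rho>" and dn: "\<forall>e\<in>E. 0 \<le> d e"
    and len: "length rA = n" "length rB = n" "length rC = n"
    and rC: "\<forall>j<n. rC ! j = (if P (Suc j) then rA ! j else rB ! j)"
    and A_cheaper: "\<forall>j\<in>{1..n}. P j \<longrightarrow> cost \<rho> E d (take j rA) \<le> cost \<rho> E d (take j rB)"
    and B_cheaper: "\<forall>j\<in>{1..n}. \<not> P j \<longrightarrow> cost \<rho> E d (take j rB) \<le> cost \<rho> E d (take j rA)"
  shows "cost \<rho> E d rC \<le> 2 * min (cost \<rho> E d rA) (cost \<rho> E d rB)"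
proof -
  have rC_step: "rC ! (j - 1) = (if P j then rA ! (j - 1) else rB ! (j - 1))" if "j \<in> {1..n}" for j
    using rC[rule_format, of "j - 1"] that by auto
  define SA where "SA = {j \<in> {1..n}. P j}"
  define SB where "SB = {j \<in> {1..n}. \<not> P j}"
  have "cost \<rho> E d rC = cost_on \<rho> E d rC (SA \<union> SB)"
    unfolding cost_eq_cost_on len(3) SA_def SB_def by (rule arg_cong) auto
  also have "\<dots> \<le> cost_on \<rho> E d rC SA + cost_on \<rho> E d rC SB"
    unfolding SA_def SB_def by (rule cost_on_Un_le[OF lf dn]) auto
  also have "\<dots> = cost_on \<rho> E d rA SA + cost_on \<rho> E d rB SB"
    using rC_step unfolding SA_def SB_def by (auto intro!: arg_cong2[where f = "(+)"] cost_on_cong)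
  also have "\<dots> \<le> min (cost \<rho> E d rA) (cost \<rho> E d rB) + min (cost \<rho> E d rB) (cost \<rho> E d rA)"
    using A_cheaper B_cheaper unfolding SA_def SB_def
    by (intro add_mono cost_on_le_min_cost[OF lf dn]) (auto simp: len)
  finally show ?thesis by (simp add: min.commute)
qed

lemma memoryless_snoc:
  assumes "memoryless F" "valid_instance V E d (Zs @ [Z])"
    and "length Cs = length Zs" "length Cs' = length Zs"
    and "F V E d (Zs @ [Z]) (Cs @ [c])" "F V E d Zs Cs'"
  shows "F V E d (Zs @ [Z]) (Cs' @ [c])"
  using assms(1)[unfolded memoryless_def, rule_format, of V E d "Zs @ [Z]" "Cs @ [c]" Cs'] assms(2-)
  by simp

lemma feasible_solD:
  assumes "feasible_sol F V E d Zs rs" "1 \<le> i" "i \<le> length Zs"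
  shows "F V E d (take i Zs) (map snd (take i rs))"
    and "good_response E (take i Zs) (rs ! (i - 1))"
  using assms unfolding feasible_sol_def by auto

lemma feasible_sol_interleave:
  assumes mem: "memoryless F" and vi: "valid_instance V E d Zs"
    and fA: "feasible_sol F V E d Zs rA" and fB: "feasible_sol F V E d Zs rB"
    and len: "length rC = length Zs"
    and pick: "\<forall>j < length Zs. rC ! j = rA ! j \<or> rC ! j = rB ! j"
  shows "feasible_sol F V E d Zs rC"
proof -
  have picked: "\<exists>X. feasible_sol F V E d Zs X \<and> rC ! j = X ! j" if "j < length Zs" for j
    using pick that fA fB by blast
  have split_take: "take (Suc i) xs = take i xs @ [xs ! i]"
    if "length xs = length Zs" "i < length Zs" for xs :: "'b list" and i
    using that by (simp add: take_Suc_conv_app_nth)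
  have good: "good_response E (take i Zs) (rC ! (i - 1))" if i: "1 \<le> i" "i \<le> length Zs" for i
  proof -
    have "i - 1 < length Zs" using i by simp
    then obtain X where "feasible_sol F V E d Zs X" "rC ! (i - 1) = X ! (i - 1)"
      using picked by blast
    then show ?thesis using feasible_solD(2) i by metis
  qed
  have "F V E d (take i Zs) (map snd (take i rC))" if "1 \<le> i" "i \<le> length Zs" for i
    using that
  proof (induction i rule: nat_induct_at_least)
    case base
    then have nonempty: "0 < length Zs" by linarith
    then obtain X where fX: "feasible_sol F V E d Zs X" and "rC ! 0 = X ! 0"
      using picked by blast
    have lenX: "length X = length Zs" using fX unfolding feasible_sol_def by simp
    show ?case
      using feasible_solD(1)[OF fX, of 1] split_take[OF len nonempty] split_take[OF lenX nonempty]
        nonempty \<open>rC ! 0 = X ! 0\<close> by simp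
  next
    case (Suc i)
    then have i: "i < length Zs" by simp
    then obtain X where fX: "feasible_sol F V E d Zs X" and "rC ! i = X ! i"
      using picked by blast
    have lenX: "length X = length Zs" using fX unfolding feasible_sol_def by simp
    have X_step: "F V E d (take i Zs @ [Zs ! i]) (map snd (take i X) @ [snd (X ! i)])"
      using feasible_solD(1)[OF fX, of "Suc i"] Suc.prems split_take[OF refl i] split_take[OF lenX i]
      by simp
    have "valid_instance V E d (take i Zs @ [Zs ! i])"
      using valid_instance_take[OF vi, of "Suc i"] split_take[OF refl i] by simp
    from memoryless_snoc[OF mem this _ _ X_step Suc.IH]
    have "F V E d (take i Zs @ [Zs ! i]) (map snd (take i rC) @ [snd (X ! i)])"
      using i lenX len by simp
    then show ?case using split_take[OF refl i] split_take[OF len i] \<open>rC ! i = X ! i\<close> by simp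
  qed
  then show ?thesis unfolding feasible_sol_def using len good by simp
qed

definition follow_cheaper :: "(nat set \<Rightarrow> real) \<Rightarrow> 'v algorithm \<Rightarrow> 'v algorithm \<Rightarrow> 'v algorithm" where
  "follow_cheaper \<rho> A B V E d Zs =
     (if cost \<rho> E d (run A V E d Zs) \<le> cost \<rho> E d (run B V E d Zs) then A V E d Zs else B V E d Zs)"

lemma run_follow_cheaper_nth:
  assumes "j < length Zs"
  shows "run (follow_cheaper \<rho> A B) V E d Zs ! j =
    (if cost \<rho> E d (take (Suc j) (run A V E d Zs)) \<le> cost \<rho> E d (take (Suc j) (run B V E d Zs))
     then run A V E d Zs ! j else run B V E d Zs ! j)"
  using assms by (simp add: run_nth follow_cheaper_def run_take)

lemma online_alg_follow_cheaper:
  fixes F :: "'v feas"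
  assumes mem: "memoryless F" and A: "online_alg F A" and B: "online_alg F B"
  shows "online_alg F (follow_cheaper \<rho> A B)"
  unfolding online_alg_def
proof (intro allI impI)
  fix V E d and Zs :: "'v set list" assume vi: "valid_instance V E d Zs"
  have "feasible_sol F V E d Zs (run A V E d Zs)" "feasible_sol F V E d Zs (run B V E d Zs)"
    using A B vi unfolding online_alg_def by blast+
  then show "feasible_sol F V E d Zs (run (follow_cheaper \<rho> A B) V E d Zs)"
    by (rule feasible_sol_interleave[OF mem vi]) (simp_all add: run_follow_cheaper_nth)
qed

lemma cost_follow_cheaper_le:
  assumes "load_function \<rho>" "valid_instance V E d Zs"
  shows "cost \<rho> E d (run (follow_cheaper \<rho> A B) V E d Zs)
    \<le> 2 * min (cost \<rho> E d (run A V E d Zs)) (cost \<rho> E d (run B V E d Zs))"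
  using assms(2) unfolding valid_instance_def
  by (intro cost_interleave_le[OF assms(1), where n = "length Zs" and P = "\<lambda>j.
      cost \<rho> E d (take j (run A V E d Zs)) \<le> cost \<rho> E d (take j (run B V E d Zs))"])
    (auto simp: run_follow_cheaper_nth)

lemma memoryless_admits_min_operator_with_factor_2:
  assumes "load_function \<rho>" "memoryless F"
  shows "admits_min_operator_with_factor F \<rho> 2"
  unfolding admits_min_operator_with_factor_def
  using assms online_alg_follow_cheaper cost_follow_cheaper_le by blast

theorem corollaryC4:
  fixes F :: "'v feas" and \<rho> :: "nat set \<Rightarrow> real"
  assumes "load_function \<rho>" and "memoryless F"
  shows "admits_min_operator F \<rho>"
  using memoryless_admits_min_operator_with_factor_2[OF assms]
  unfolding admits_min_operator_def by blast

end
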